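(* For any positive increasing function $\phi$ with $\phi(X)\to\infty$ as $X\to\infty$, there exists a set $A\subset\mathbb{N}$ such that the set $A^2+A$ has density $1$ and $$\liminf_{X\to\infty} \frac{A(X)}{(X\phi(X))^{1/3}}<\infty.$$
   Context: $\mathbb{N}$ is the set of positive integers. $A^2=\{ab: a,b\in A\}$, $A^2+A=\{x+y: x\in A^2, y\in A\}$. For a set $S$ of nonnegative integers, $S(X)=|S\cap[1,X]|$; $S$ has density $1$ if $\lim_{X\to\infty} S(X)/X = 1$. *)

theory Defs
  imports "HOL-Analysis.Analysis"
begin

definition prodset :: "nat set \<Rightarrow> nat set" where
  "prodset A = {a * b | a b. a \<in> A \<and> b \<in> A}"

definition prodsumset :: "nat set \<Rightarrow> nat set" where
  "prodsumset A = {x + y | x y. x \<in> prodset A \<and> y \<in> A}"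

definition count_upto :: "nat set \<Rightarrow> real \<Rightarrow> nat" where
  "count_upto S X = card {s \<in> S. 1 \<le> s \<and> real s \<le> X}"

definition has_density_one :: "nat set \<Rightarrow> bool" where
  "has_density_one S \<longleftrightarrow> ((\<lambda>X. real (count_upto S X) / X) \<longlongrightarrow> 1) at_top"

end

theory Submission
  imports Defs "HOL-Real_Asymp.Real_Asymp"
begin

text \<open>
  Put \<open>1\<close> into \<open>A\<close> and, for each level \<open>j\<close> with \<open>Q = 2\<^sup>j\<close>, either the sparse part
  \<open>[Q, 9Q] \<union> [Q\<^sup>2, Q\<^sup>2 + 9Q]\<close> (about \<open>18Q\<close> elements) or the dense part \<open>[Q\<^sup>3 + 1, 16Q\<^sup>3]\<close>.
  In both cases \<open>A\<^sup>2 + A\<close> contains \<open>[Q\<^sup>3 + Q\<^sup>2, 9Q\<^sup>3 + Q\<^sup>2]\<close>: as \<open>a b + c\<close> with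
  \<open>a \<approx> Q\<close>, \<open>b \<approx> Q\<^sup>2\<close>, \<open>c \<approx> Q\<^sup>2\<close> resp. as \<open>1 \<cdot> 1 + c\<close>. These ranges overlap for consecutive
  levels, so \<open>A\<^sup>2 + A\<close> is cofinite.
  The dense levels are the \<open>j \<in> (m, 3m]\<close> for \<open>m = 16\<^sup>k\<^sup>+\<^sup>1\<close>. At \<open>X = 8\<^sup>m = (2\<^sup>m)\<^sup>3\<close> the elements of
  \<open>A\<close> up to \<open>X\<close> then come from sparse levels \<open>j \<le> m\<close> and from dense levels \<open>j\<close> with
  \<open>3j + 4 \<le> m\<close>, whose elements lie below \<open>2\<^sup>m\<close>; hence \<open>A(X) \<le> 29 X\<^sup>1\<^sup>/\<^sup>3\<close> along these \<open>X\<close>.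
\<close>

lemma prodsumsetI:
  assumes "a \<in> A" "b \<in> A" "c \<in> A"
  shows "a * b + c \<in> prodsumset A"
  using assms unfolding prodsumset_def prodset_def by blast

lemma Suc_mem_prodsumset:
  assumes "1 \<in> A" "a \<in> A"
  shows "Suc a \<in> prodsumset A"
  using prodsumsetI[OF assms(1,1,2)] by simp

lemma cube_interval_subset_prodsumset:
  fixes Q :: nat
  assumes Q: "Q \<ge> 1" and small: "{Q..9*Q} \<subseteq> A" and square: "{Q^2..Q^2+9*Q} \<subseteq> A"
  shows "{Q^3+Q^2..9*Q^3+Q^2} \<subseteq> prodsumset A"
proof
  fix x assume x: "x \<in> {Q^3+Q^2..9*Q^3+Q^2}"
  define y where "y = x - Q^2"
  have y: "Q * Q^2 \<le> y" "y \<le> (9*Q) * Q^2"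
    using x unfolding y_def by (auto simp: power3_eq_cube power2_eq_square)
  have Q2: "Q^2 > 0" using Q by simp
  define a where "a = y div Q^2"
  define b where "b = y div a"
  define r where "r = y mod a"
  have a_lower: "Q \<le> a" unfolding a_def using div_le_mono[OF y(1), of "Q^2"] Q2 by simp
  have a_upper: "a \<le> 9*Q" unfolding a_def using div_le_mono[OF y(2), of "Q^2"] Q2 by simp
  have "a * Q^2 \<le> y" unfolding a_def by (simp add: div_times_less_eq_dividend)
  then have b_lower: "Q^2 \<le> b" unfolding b_def using div_le_mono[of "a * Q^2" y a] a_lower Q by simp
  have "b * a \<le> y" unfolding b_def by (simp add: div_times_less_eq_dividend)
  also have "y < a * Q^2 + Q^2" unfolding a_def
    by (metis Q2 add.commute div_mult_mod_eq mod_less_divisor nat_add_left_cancel_less)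
  also have "\<dots> \<le> (Q^2 + Q) * a" using a_lower by (simp add: algebra_simps power2_eq_square)
  finally have b_upper: "b < Q^2 + Q" by simp
  have r: "r < a" unfolding r_def using a_lower Q by simp
  have "x = a * b + (Q^2 + r)"
  proof -
    have "y = a * b + r" unfolding b_def r_def by simp
    then show ?thesis using x unfolding y_def atLeastAtMost_iff by linarith
  qed
  moreover have "a \<in> A" using small a_lower a_upper by auto
  moreover have "b \<in> A" using square b_lower b_upper by auto
  moreover have "Q^2 + r \<in> A" using square r a_upper by auto
  ultimately show "x \<in> prodsumset A" using prodsumsetI by metis
qed

lemma atLeast_subset_if_chained_intervals:
  fixes a b :: "nat \<Rightarrow> nat"
  assumes intervals: "\<And>j. j \<ge> j0 \<Longrightarrow> {a j..b j} \<subseteq> S"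
    and chain: "\<And>j. j \<ge> j0 \<Longrightarrow> a (Suc j) \<le> Suc (b j)"
    and unbounded: "\<And>j. j \<le> b j"
  shows "{a j0..} \<subseteq> S"
proof -
  have covered: "{a j0..b n} \<subseteq> S" if "n \<ge> j0" for n
    using that
  proof (induction n rule: dec_induct)
    case base
    then show ?case using intervals by simp
  next
    case (step n)
    have "{a j0..b (Suc n)} \<subseteq> {a j0..b n} \<union> {a (Suc n)..b (Suc n)}"
      using chain[OF step.hyps(1)] by auto
    then show ?case using step.IH intervals[of "Suc n"] step.hyps(1) by auto
  qed
  show ?thesis
  proof
    fix x assume "x \<in> {a j0..}"
    moreover have "x \<le> b (max j0 x)" using unbounded[of "max j0 x"] by linarith
    ultimately show "x \<in> S" using covered[of "max j0 x"] by auto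
  qed
qed

lemma has_density_one_if_cofinite:
  assumes "finite (- S)"
  shows "has_density_one S"
proof -
  obtain n0 where "- S \<subseteq> {..<n0}" using assms finite_nat_iff_bounded by blast
  then have n0: "n \<in> S" if "n \<ge> n0" for n using that by auto
  have bounds: "\<forall>\<^sub>F X in at_top.
      (X - real n0 - 1) / X \<le> real (count_upto S X) / X \<and> real (count_upto S X) / X \<le> 1"
    using eventually_ge_at_top[of "1::real"]
  proof eventually_elim
    case (elim X)
    let ?T = "{s \<in> S. 1 \<le> s \<and> real s \<le> X}"
    have T: "?T \<subseteq> {1..nat \<lfloor>X\<rfloor>}" by auto linarith
    have "{Suc n0..nat \<lfloor>X\<rfloor>} \<subseteq> ?T" using n0 by auto linarith
    then have "card {Suc n0..nat \<lfloor>X\<rfloor>} \<le> card ?T"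
      by (rule card_mono[OF finite_subset[OF T finite_atLeastAtMost]])
    moreover have "card ?T \<le> card {1..nat \<lfloor>X\<rfloor>}" by (rule card_mono[OF _ T]) simp
    ultimately have "nat \<lfloor>X\<rfloor> \<le> card ?T + n0" "card ?T \<le> nat \<lfloor>X\<rfloor>" by simp_all
    then have "X - real n0 - 1 \<le> real (count_upto S X)" "real (count_upto S X) \<le> X"
      unfolding count_upto_def using elim by linarith+
    then show ?case using elim by (simp add: divide_right_mono)
  qed
  have lower: "((\<lambda>X::real. (X - real n0 - 1) / X) \<longlongrightarrow> 1) at_top" by real_asymp
  show ?thesis unfolding has_density_one_def
    using bounds by (intro tendsto_sandwich[OF _ _ lower tendsto_const]) (auto elim: eventually_mono)
qed

lemma Liminf_le_if_bounded_along:
  fixes f :: "'a \<Rightarrow> 'b::complete_linorder"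
  assumes g: "filterlim g F sequentially" and bound: "\<And>k. f (g k) \<le> B"
  shows "Liminf F f \<le> B"
proof (rule ccontr)
  assume "\<not> Liminf F f \<le> B"
  then have "eventually (\<lambda>x. B < f x) F" by (metis le_Liminf_iff not_le order_refl)
  then have "eventually (\<lambda>k. B < f (g k)) sequentially"
    using g by (rule eventually_compose_filterlim)
  then show False using bound by (metis eventually_sequentially le_refl not_le)
qed

lemma two_power_square_cube: "((2::nat)^j)^2 = 4^j" "((2::nat)^j)^3 = 8^j"
proof -
  have "((2::nat)^j)^2 = (2^2)^j" "((2::nat)^j)^3 = (2^3)^j" by (metis power_mult mult.commute)+
  then show "((2::nat)^j)^2 = 4^j" "((2::nat)^j)^3 = 8^j" by simp_all
qed

definition sparse_part :: "nat \<Rightarrow> nat set" where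
  "sparse_part j = {2^j..9*2^j} \<union> {4^j..4^j+9*2^j}"

definition dense_part :: "nat \<Rightarrow> nat set" where
  "dense_part j = {8^j+1..16*8^j}"

definition thin_basis :: "nat set \<Rightarrow> nat set" where
  "thin_basis J = {1} \<union> (\<Union>j\<in>-J. sparse_part j) \<union> (\<Union>j\<in>J. dense_part j)"

lemma zero_not_mem_thin_basis: "0 \<notin> thin_basis J"
  unfolding thin_basis_def sparse_part_def dense_part_def by auto

lemma level_interval_subset_prodsumset_thin_basis:
  assumes "j \<ge> 1"
  shows "{8^j+4^j..9*8^j+4^j} \<subseteq> prodsumset (thin_basis J)"
proof (cases "j \<in> J")
  case True
  have one: "1 \<in> thin_basis J" and dense: "dense_part j \<subseteq> thin_basis J"
    using True unfolding thin_basis_def by blast+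
  have four: "(4::nat) \<le> 4^j" using power_increasing[OF assms, of "4::nat"] by simp
  have "(4::nat)^j \<le> 8^j" by (rule power_mono) simp_all
  show ?thesis
  proof
    fix x :: nat assume x: "x \<in> {8^j+4^j..9*8^j+4^j}"
    then have "x - 1 \<in> dense_part j"
      using four \<open>4^j \<le> 8^j\<close> unfolding dense_part_def atLeastAtMost_iff by linarith
    then have "Suc (x - 1) \<in> prodsumset (thin_basis J)"
      using Suc_mem_prodsumset[OF one] dense by blast
    moreover have "Suc (x - 1) = x" using x four by simp
    ultimately show "x \<in> prodsumset (thin_basis J)" by simp
  qed
next
  case False
  then have "sparse_part j \<subseteq> thin_basis J" unfolding thin_basis_def by blast
  then show ?thesis
    unfolding sparse_part_def
    by (intro cube_interval_subset_prodsumset[of "2^j" "thin_basis J", unfolded two_power_square_cube]) auto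
qed

lemma atLeast_subset_prodsumset_thin_basis: "{80..} \<subseteq> prodsumset (thin_basis J)"
proof -
  have "{8^2+4^2..} \<subseteq> prodsumset (thin_basis J)"
  proof (rule atLeast_subset_if_chained_intervals
      [where a = "\<lambda>j. 8^j+4^j" and b = "\<lambda>j. 9*8^j+4^j"])
    show "{8^j+4^j..9*8^j+4^j} \<subseteq> prodsumset (thin_basis J)" if "j \<ge> 2" for j :: nat
      using that by (intro level_interval_subset_prodsumset_thin_basis) simp
    show "8^Suc j + 4^Suc j \<le> Suc (9*8^j + 4^j)" if "j \<ge> 2" for j :: nat
    proof -
      have "(4::nat) \<le> 2^j" using power_increasing[OF that, of "2::nat"] by simp
      then have "4 * 4^j \<le> 2^j * (4::nat)^j" by simp
      also have "\<dots> = (2 * 4)^j" by (rule power_mult_distrib[symmetric])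
      finally show ?thesis by simp
    qed
    show "j \<le> 9*8^j + 4^j" for j :: nat
    proof -
      have "j < 2^j" by (rule less_exp)
      also have "(2::nat)^j \<le> 8^j" by (rule power_mono) simp_all
      finally show ?thesis by simp
    qed
  qed
  then show ?thesis by simp
qed

lemma finite_compl_prodsumset_thin_basis: "finite (- prodsumset (thin_basis J))"
proof (rule finite_subset)
  show "- prodsumset (thin_basis J) \<subseteq> {..<80}"
    using atLeast_subset_prodsumset_thin_basis[of J] unfolding subset_iff
    by (metis ComplD atLeast_iff lessThan_iff not_le)
qed simp

lemma thin_basis_upto_subset:
  assumes dense_above: "{m<..3*m} \<subseteq> J"
    and dense_below: "\<And>j. j \<in> J \<Longrightarrow> j < m \<Longrightarrow> 3*j + 4 \<le> m"
  shows "{s \<in> thin_basis J. 1 \<le> s \<and> s \<le> 8^m}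
    \<subseteq> {1..9*2^m} \<union> (\<Union>j\<le>m. {4^j..4^j+9*2^j})"
proof
  fix s :: nat assume "s \<in> {s \<in> thin_basis J. 1 \<le> s \<and> s \<le> 8^m}"
  then have s: "s \<in> thin_basis J" "1 \<le> s" "s \<le> 8^m" by auto
  have eight: "(8::nat)^i = 2^(3*i)" for i by (simp add: power_mult)
  from s(1) consider "s = 1"
    | j where "j \<notin> J" "s \<in> sparse_part j"
    | j where "j \<in> J" "s \<in> dense_part j"
    unfolding thin_basis_def by blast
  then show "s \<in> {1..9*2^m} \<union> (\<Union>j\<le>m. {4^j..4^j+9*2^j})"
  proof cases
    case 1
    then show ?thesis by simp
  next
    case (2 j)
    have "2^j \<le> s" using 2(2) power_mono[of "2::nat" 4 j] unfolding sparse_part_def by auto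
    have "j \<le> m"
    proof (rule ccontr)
      assume "\<not> j \<le> m"
      moreover have "j \<notin> {m<..3*m}" using 2(1) dense_above by blast
      ultimately have "(2::nat)^(3*m) < 2^j" by simp
      then show False using \<open>2^j \<le> s\<close> s(3) unfolding eight by linarith
    qed
    then have "(2::nat)^j \<le> 2^m" by simp
    from 2(2) consider "s \<in> {2^j..9*2^j}" | "s \<in> {4^j..4^j+9*2^j}" unfolding sparse_part_def by blast
    then show ?thesis
    proof cases
      case 1
      then have "s \<le> 9*2^m" using \<open>(2::nat)^j \<le> 2^m\<close> unfolding atLeastAtMost_iff by linarith
      then show ?thesis using s(2) by simp
    next
      case 2
      then show ?thesis using \<open>j \<le> m\<close> by blast
    qed
  next
    case (3 j)
    have "8^j < s" using 3(2) unfolding dense_part_def by simp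
    then have "(8::nat)^j < 8^m" using s(3) by linarith
    then have "j < m" by simp
    have "s \<le> 16 * 8^j" using 3(2) unfolding dense_part_def by simp
    also have "\<dots> = 2^(3*j+4)" unfolding eight by (simp add: power_add)
    also have "\<dots> \<le> 2^m" using dense_below[OF 3(1) \<open>j < m\<close>] by (rule power_increasing) simp
    finally show ?thesis using s(2) by simp
  qed
qed

lemma card_sparse_cover_le:
  "card ({1..9*2^m::nat} \<union> (\<Union>j\<le>m. {4^j..4^j+9*2^j})) \<le> 29 * (2::nat)^m"
proof -
  have geometric: "(\<Sum>j\<le>n. 9*2^j + 1) \<le> 20 * (2::nat)^n" for n
  proof (induction n)
    case (Suc n)
    moreover have "(1::nat) \<le> 2^n" by simp
    ultimately show ?case by (simp only: sum.atMost_Suc power_Suc)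
  qed simp
  have "card ({1..9*2^m::nat} \<union> (\<Union>j\<le>m. {4^j..4^j+9*2^j}))
      \<le> card {1..9*2^m::nat} + card (\<Union>j\<le>m. {4^j..4^j+9*2^j::nat})" by (rule card_Un_le)
  also have "card (\<Union>j\<le>m. {4^j..4^j+9*2^j::nat}) \<le> (\<Sum>j\<le>m. card {(4::nat)^j..4^j+9*2^j})"
    by (rule card_UN_le) simp
  also have "(\<Sum>j\<le>m. card {(4::nat)^j..4^j+9*2^j}) = (\<Sum>j\<le>m. 9*2^j + 1)" by simp
  also have "\<dots> \<le> 20 * 2^m" by (rule geometric)
  finally show ?thesis by simp
qed

lemma count_upto_thin_basis_le:
  assumes "{m<..3*m} \<subseteq> J" and "\<And>j. j \<in> J \<Longrightarrow> j < m \<Longrightarrow> 3*j + 4 \<le> m"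
  shows "count_upto (thin_basis J) (8^m) \<le> 29 * 2^m"
proof -
  have "count_upto (thin_basis J) (8^m) = card {s \<in> thin_basis J. 1 \<le> s \<and> s \<le> 8^m}"
    unfolding count_upto_def by simp
  also have "\<dots> \<le> card ({1..9*2^m} \<union> (\<Union>j\<le>m. {4^j..4^j+9*2^j::nat}))"
    by (rule card_mono[OF _ thin_basis_upto_subset[OF assms]]) simp
  also have "\<dots> \<le> 29 * 2^m" by (rule card_sparse_cover_le)
  finally show ?thesis .
qed

definition dense_levels :: "nat set" where
  "dense_levels = (\<Union>k. {16^Suc k<..3*16^Suc k})"

lemma dense_levels_below_scale:
  assumes "j \<in> dense_levels" "j < 16^Suc k"
  shows "3*j + 4 \<le> 16^Suc k"
proof -
  from assms(1) obtain i where i: "16^Suc i < j" "j \<le> 3*16^Suc i"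
    unfolding dense_levels_def by auto
  then have "(16::nat)^Suc i < 16^Suc k" using assms(2) by linarith
  then have "Suc i \<le> k" by simp
  then have "(16::nat)^Suc i \<le> 16^k" by (intro power_increasing) auto
  moreover have "(1::nat) \<le> 16^k" by simp
  ultimately show ?thesis using i(2) by (simp only: power_Suc)
qed

lemma real_eight_power_powr_third: "((8::real)^m) powr (1/3) = 2^m"
proof -
  have "(8::real)^m = (2^m) powr 3"
    using arg_cong[OF two_power_square_cube(2), of real m] by simp
  also have "\<dots> powr (1/3) = (2^m) powr (3 * (1/3))" by (rule powr_powr)
  finally show ?thesis by simp
qed

lemma ratio_le_if_count_le_cube_root:
  fixes \<phi> :: "real \<Rightarrow> real"
  assumes \<phi>1: "\<phi> 1 > 0" and mono: "mono_on {1..} \<phi>" and X: "X \<ge> 1"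
    and c: "0 \<le> c" "c \<le> C * X powr (1/3)"
  shows "c / (X * \<phi> X) powr (1/3) \<le> C / \<phi> 1 powr (1/3)"
proof -
  have \<phi>X: "\<phi> 1 \<le> \<phi> X" using mono X unfolding mono_on_def by simp
  have C: "C \<ge> 0" using c X by (smt (verit) powr_gt_zero zero_le_mult_iff)
  have "c / (X * \<phi> X) powr (1/3) = c / (X powr (1/3) * \<phi> X powr (1/3))"
    using X \<phi>1 \<phi>X by (simp add: powr_mult)
  also have "\<dots> \<le> C * X powr (1/3) / (X powr (1/3) * \<phi> X powr (1/3))"
    by (rule divide_right_mono[OF c(2)]) simp
  also have "\<dots> = C / \<phi> X powr (1/3)" using X by simp
  also have "\<dots> \<le> C / \<phi> 1 powr (1/3)"
    using C \<phi>1 \<phi>X by (intro divide_left_mono powr_mono2 mult_pos_pos) auto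
  finally show ?thesis .
qed

lemma count_upto_thin_basis_dense_levels_le:
  "real (count_upto (thin_basis dense_levels) (8^16^Suc k)) \<le> 29 * ((8::real)^16^Suc k) powr (1/3)"
proof -
  have "count_upto (thin_basis dense_levels) (8^16^Suc k) \<le> 29 * 2^16^Suc k"
    by (intro count_upto_thin_basis_le dense_levels_below_scale) (auto simp: dense_levels_def)
  then have "real (count_upto (thin_basis dense_levels) (8^16^Suc k)) \<le> real (29 * 2^16^Suc k)"
    by (rule of_nat_mono)
  then show ?thesis unfolding real_eight_power_powr_third by simp
qed

lemma filterlim_eight_power_scales: "filterlim (\<lambda>k. (8::real)^16^Suc k) at_top sequentially"
proof (rule filterlim_at_top_mono[OF filterlim_real_sequentially always_eventually], rule allI)
  fix k :: nat
  have "k \<le> 16^Suc k" by (rule order.trans[OF self_le_ge2_pow[of 16 k]]) simp_all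
  also have "(16::nat)^Suc k \<le> 8^16^Suc k" by simp
  finally show "real k \<le> 8^16^Suc k" by (simp flip: of_nat_le_iff)
qed

theorem theorem1p3:
  fixes \<phi> :: "real \<Rightarrow> real"
  assumes "\<forall>X\<ge>1. \<phi> X > 0"
    and "mono_on {1..} \<phi>"
    and "filterlim \<phi> at_top at_top"
  shows "\<exists>A::nat set. 0 \<notin> A \<and> has_density_one (prodsumset A) \<and>
           Liminf at_top (\<lambda>X. ereal (real (count_upto A X) / (X * \<phi> X) powr (1/3))) < \<infinity>"
proof -
  define A where "A = thin_basis dense_levels"
  have Liminf_le: "Liminf at_top (\<lambda>X. ereal (real (count_upto A X) / (X * \<phi> X) powr (1/3)))
      \<le> 29 / \<phi> 1 powr (1/3)"
  proof (rule Liminf_le_if_bounded_along[OF filterlim_eight_power_scales])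
    fix k :: nat
    have "real (count_upto A (8^16^Suc k)) / (8^16^Suc k * \<phi> (8^16^Suc k)) powr (1/3)
        \<le> 29 / \<phi> 1 powr (1/3)"
      unfolding A_def using assms(1,2)
      by (intro ratio_le_if_count_le_cube_root count_upto_thin_basis_dense_levels_le) auto
    then show "ereal (real (count_upto A (8^16^Suc k)) / (8^16^Suc k * \<phi> (8^16^Suc k)) powr (1/3))
        \<le> ereal (29 / \<phi> 1 powr (1/3))" by simp
  qed
  show ?thesis
  proof (intro exI conjI)
    show "0 \<notin> A" unfolding A_def by (rule zero_not_mem_thin_basis)
    show "has_density_one (prodsumset A)"
      unfolding A_def by (rule has_density_one_if_cofinite[OF finite_compl_prodsumset_thin_basis])
    show "Liminf at_top (\<lambda>X. ereal (real (count_upto A X) / (X * \<phi> X) powr (1/3))) < \<infinity>"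
      using Liminf_le by (rule le_less_trans) simp
  qed
qed

end
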